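(* Let $n \ge 2$ and $X_0, Y_0 \in \mathrm{S}^{n-1}$. Construct a pair of processes $\{(X_t, Y_t)\}_{t \ge 0}$ by applying, at every step $t \ge 0$ and conditionally on $(X_t, Y_t)$, the proportional coupling described in the context. Then for every $t \ge 0$, $$\mathbb{E}\Big[\sum_{i=1}^n \big(X_t[i]^2 - Y_t[i]^2\big)^2\Big] \le 2\Big(1 - \frac{1}{2n}\Big)^t.$$
   Context: $\mathrm{S}^{n-1} = \{X \in \mathbb{R}^n : \sum_{i=1}^n X[i]^2 = 1\}$. For $1 \le i < j \le n$, $\theta \in [0,2\pi)$ and $X \in \mathrm{S}^{n-1}$, let $\mathrm{F}(i,j,\theta,X) \in \mathrm{S}^{n-1}$ be the vector obtained from $X$ by replacing $(X[i], X[j])$ with $(\cos(\theta)X[i] - \sin(\theta)X[j],\ \sin(\theta)X[i] + \cos(\theta)X[j])$ and leaving all other coordinates unchanged. (Kac's walk is $X_{t+1} = \mathrm{F}(i_t,j_t,\theta_t,X_t)$ with $(i_t,j_t)$ uniform among pairs $i<j$ and $\theta_t$ uniform on $[0,2\pi)$, all independent.) Proportional coupling of one step from $(X_t, Y_t)$: choose $1 \le i < j \le n$ uniformly among all pairs and $\theta \in [0,2\pi)$ uniformly, independently, and set $X_{t+1} = \mathrm{F}(i,j,\theta,X_t)$. Then choose $\varphi \in [0,2\pi)$ uniformly at random among all angles satisfying $X_{t+1}[i] = \sqrt{X_t[i]^2 + X_t[j]^2}\cos(\varphi)$ and $X_{t+1}[j] = \sqrt{X_t[i]^2 + X_t[j]^2}\sin(\varphi)$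 (the solution is unique unless $X_t[i]=X_t[j]=0$, in which case every angle qualifies). Then choose $\theta' \in [0,2\pi)$ uniformly among the angles satisfying $\mathrm{F}(i,j,\theta',Y_t)[i] = \sqrt{Y_t[i]^2 + Y_t[j]^2}\cos(\varphi)$ and $\mathrm{F}(i,j,\theta',Y_t)[j] = \sqrt{Y_t[i]^2 + Y_t[j]^2}\sin(\varphi)$, and set $Y_{t+1} = \mathrm{F}(i,j,\theta',Y_t)$. Each marginal process is then a copy of Kac's walk. *)

theory Defs
  imports "HOL-Probability.Probability"
begin

text \<open>Vectors of R^n are functions nat => real; coordinates are indexed 0..n-1
  (the paper's index i corresponds to i-1 here).\<close>

definition on_sphere :: "nat \<Rightarrow> (nat \<Rightarrow> real) \<Rightarrow> bool" where
  "on_sphere n X \<longleftrightarrow> (\<Sum>i<n. (X i)^2) = 1"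

definition F :: "nat \<Rightarrow> nat \<Rightarrow> real \<Rightarrow> (nat \<Rightarrow> real) \<Rightarrow> (nat \<Rightarrow> real)" where
  "F i j \<theta> X = X(i := cos \<theta> * X i - sin \<theta> * X j, j := sin \<theta> * X i + cos \<theta> * X j)"

text \<open>The angle phi: the unique angle in [0,2pi) with X'[i] = r cos phi, X'[j] = r sin phi,
  r = sqrt(X[i]^2+X[j]^2); if X[i]=X[j]=0 every angle qualifies and the auxiliary uniform
  angle psi is used.\<close>
definition coupling_phi :: "nat \<Rightarrow> nat \<Rightarrow> (nat \<Rightarrow> real) \<Rightarrow> (nat \<Rightarrow> real) \<Rightarrow> real \<Rightarrow> real" where
  "coupling_phi i j X X' \<psi> =
     (if X i = 0 \<and> X j = 0 then \<psi>
      else (THE \<phi>. 0 \<le> \<phi> \<and> \<phi> < 2 * pi \<and>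
              X' i = sqrt ((X i)^2 + (X j)^2) * cos \<phi> \<and>
              X' j = sqrt ((X i)^2 + (X j)^2) * sin \<phi>))"

text \<open>The angle theta': unique angle in [0,2pi) with F(i,j,theta',Y) having polar angle phi in
  coordinates (i,j); if Y[i]=Y[j]=0 every angle qualifies and the auxiliary uniform angle eta is used.\<close>
definition coupling_theta2 :: "nat \<Rightarrow> nat \<Rightarrow> (nat \<Rightarrow> real) \<Rightarrow> real \<Rightarrow> real \<Rightarrow> real" where
  "coupling_theta2 i j Y \<phi> \<eta> =
     (if Y i = 0 \<and> Y j = 0 then \<eta>
      else (THE \<theta>2. 0 \<le> \<theta>2 \<and> \<theta>2 < 2 * pi \<and>
              F i j \<theta>2 Y i = sqrt ((Y i)^2 + (Y j)^2) * cos \<phi> \<and>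
              F i j \<theta>2 Y j = sqrt ((Y i)^2 + (Y j)^2) * sin \<phi>))"

definition coupling_step ::
  "(nat \<Rightarrow> real) \<times> (nat \<Rightarrow> real) \<Rightarrow> (nat \<times> nat) \<times> real \<times> real \<times> real
     \<Rightarrow> (nat \<Rightarrow> real) \<times> (nat \<Rightarrow> real)" where
  "coupling_step XY inp =
     (let X = fst XY; Y = snd XY; i = fst (fst inp); j = snd (fst inp);
          \<theta> = fst (snd inp); \<psi> = fst (snd (snd inp)); \<eta> = snd (snd (snd inp));
          X' = F i j \<theta> X;
          \<phi> = coupling_phi i j X X' \<psi>;
          \<theta>2 = coupling_theta2 i j Y \<phi> \<eta>
      in (X', F i j \<theta>2 Y))"

definition uniform_angle :: "real measure" where
  "uniform_angle = uniform_measure lborel {0..<2 * pi}"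

text \<open>Law of the per-step input: pair (i,j), i<j<n, uniform; theta uniform; plus two
  independent uniform auxiliary angles used for the tie-breaking choices; all independent.\<close>
definition coupling_input :: "nat \<Rightarrow> ((nat \<times> nat) \<times> real \<times> real \<times> real) measure" where
  "coupling_input n = uniform_count_measure {(i, j). i < j \<and> j < n}
      \<Otimes>\<^sub>M (uniform_angle \<Otimes>\<^sub>M (uniform_angle \<Otimes>\<^sub>M uniform_angle))"

fun coupled_process ::
  "(nat \<Rightarrow> real) \<Rightarrow> (nat \<Rightarrow> real) \<Rightarrow> ((nat \<times> nat) \<times> real \<times> real \<times> real) stream
     \<Rightarrow> nat \<Rightarrow> (nat \<Rightarrow> real) \<times> (nat \<Rightarrow> real)" where
  "coupled_process X0 Y0 \<omega> 0 = (X0, Y0)"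
| "coupled_process X0 Y0 \<omega> (Suc t) = coupling_step (coupled_process X0 Y0 \<omega> t) (\<omega> !! t)"

end

theory Submission
  imports Defs
begin

text \<open>In a coupled step both vectors are rotated in the same plane (i,j) onto the same polar
  angle phi, each keeping its radius in that plane. Writing A = (X[i]^2 + X[j]^2) - (Y[i]^2 + Y[j]^2),
  the new differences X[k]^2 - Y[k]^2 on coordinates i and j are A cos^2 phi and A sin^2 phi, so
  the pair's contribution to the squared distance becomes A^2 (cos^4 phi + sin^4 phi), whose mean over
  a uniform angle is 3/4 A^2. Averaging over the pair (i,j), and using that the differences sum to
  zero since both vectors have the same norm, the expected squared distance contracts by a factor
  at most 1 - 1/(2n). Iterating this bound along the stream of inputs, and bounding the initial
  squared distance by 2, gives the theorem.\<close>

lemma angle_eq_if_cos_sin_eq: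
  fixes a b :: real
  assumes "0 \<le> a" "a < 2 * pi" "0 \<le> b" "b < 2 * pi" "cos a = cos b" "sin a = sin b"
  shows "a = b"
proof -
  obtain m :: int where m: "a = b + 2 * pi * m"
    using sin_cos_eq_iff assms(5,6) by metis
  have "2 * pi * m < 2 * pi * 1" "2 * pi * (-1) < 2 * pi * m"
    using m assms(1-4) by linarith+
  then have "real_of_int m < 1" "-1 < real_of_int m"
    by (simp_all only: mult_less_cancel_left_pos pi_gt_zero mult_pos_pos zero_less_numeral)
  then have "m = 0"
    by linarith
  then show ?thesis
    using m by simp
qed

lemma the_angle_eq:
  assumes "0 \<le> t" "t < 2 * pi" "P t" "\<And>u. P u \<Longrightarrow> cos u = cos t \<and> sin u = sin t"
  shows "(THE u. 0 \<le> u \<and> u < 2 * pi \<and> P u) = t"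
  using assms by (intro the_equality) (auto intro: angle_eq_if_cos_sin_eq)

lemma angle_representative:
  obtains t :: real where "0 \<le> t" "t < 2 * pi" "cos t = cos v" "sin t = sin v"
  using sincos_total_2pi[OF sin_cos_squared_add2[of v]] by metis

lemma cos_sin_add_eq_iff:
  fixes u b v :: real
  shows "cos (u + b) = cos v \<and> sin (u + b) = sin v \<longleftrightarrow> cos u = cos (v - b) \<and> sin u = sin (v - b)"
proof -
  have "(\<exists>m::int. u + b = v + 2 * pi * m) \<longleftrightarrow> (\<exists>m::int. u = v - b + 2 * pi * m)"
    by (auto simp: algebra_simps)
  then show ?thesis
    using sin_cos_eq_iff[of "u + b" v] sin_cos_eq_iff[of u "v - b"] by metis
qed

lemma polar_form:
  fixes x y :: real
  assumes "\<not> (x = 0 \<and> y = 0)"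
  obtains r \<alpha> where "r > 0" "x = r * cos \<alpha>" "y = r * sin \<alpha>"
proof -
  define r where "r = sqrt (x^2 + y^2)"
  have "r > 0"
    using assms sum_power2_gt_zero_iff[of x y] by (simp add: r_def)
  have "r^2 = x^2 + y^2"
    by (simp add: r_def)
  then have "(x / r)^2 + (y / r)^2 = 1"
    using assms by (simp add: power_divide add_divide_distrib[symmetric])
  then obtain \<alpha> where "x / r = cos \<alpha>" "y / r = sin \<alpha>"
    by (rule sincos_total_2pi)
  then show ?thesis
    using that \<open>r > 0\<close> by (simp add: field_simps)
qed

lemma polar_nonzero:
  fixes r \<alpha> :: real
  assumes "r > 0"
  shows "\<not> (r * cos \<alpha> = 0 \<and> r * sin \<alpha> = 0)"
  using assms sin_cos_squared_add2[of \<alpha>] by (auto simp del: sin_cos_squared_add2)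

lemma sqrt_polar:
  fixes r \<alpha> :: real
  assumes "r \<ge> 0"
  shows "sqrt ((r * cos \<alpha>)^2 + (r * sin \<alpha>)^2) = r"
proof -
  have "(r * cos \<alpha>)^2 + (r * sin \<alpha>)^2 = r^2"
    by (simp add: power_mult_distrib flip: distrib_left)
  then show ?thesis
    using assms by simp
qed

lemma F_polar:
  assumes "i \<noteq> j" "X i = r * cos \<alpha>" "X j = r * sin \<alpha>"
  shows "F i j \<theta> X i = r * cos (\<theta> + \<alpha>)" "F i j \<theta> X j = r * sin (\<theta> + \<alpha>)"
  using assms by (simp_all add: F_def cos_add sin_add algebra_simps)

definition set_direction :: "nat \<Rightarrow> nat \<Rightarrow> real \<Rightarrow> real \<Rightarrow> (nat \<Rightarrow> real) \<Rightarrow> (nat \<Rightarrow> real)" where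
  "set_direction i j c s X = (let r = sqrt ((X i)^2 + (X j)^2) in X(i := r * c, j := r * s))"

lemma coupling_phi_polar:
  assumes "i \<noteq> j" "r > 0" "X i = r * cos \<alpha>" "X j = r * sin \<alpha>"
  shows "cos (coupling_phi i j X (F i j \<theta> X) \<psi>) = cos (\<theta> + \<alpha>)"
    and "sin (coupling_phi i j X (F i j \<theta> X) \<psi>) = sin (\<theta> + \<alpha>)"
proof -
  obtain t where t: "0 \<le> t" "t < 2 * pi" "cos t = cos (\<theta> + \<alpha>)" "sin t = sin (\<theta> + \<alpha>)"
    by (rule angle_representative)
  have "\<not> (X i = 0 \<and> X j = 0)"
    using polar_nonzero[OF assms(2)] assms(3,4) by simp
  then have "coupling_phi i j X (F i j \<theta> X) \<psi> =
      (THE \<phi>. 0 \<le> \<phi> \<and> \<phi> < 2 * pi \<and> cos (\<theta> + \<alpha>) = cos \<phi> \<and> sin (\<theta> + \<alpha>) = sin \<phi>)"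
    using assms by (auto simp: coupling_phi_def F_polar sqrt_polar)
  also have "\<dots> = t"
    by (rule the_angle_eq) (use t in auto)
  finally have "coupling_phi i j X (F i j \<theta> X) \<psi> = t" .
  then show "cos (coupling_phi i j X (F i j \<theta> X) \<psi>) = cos (\<theta> + \<alpha>)"
    and "sin (coupling_phi i j X (F i j \<theta> X) \<psi>) = sin (\<theta> + \<alpha>)"
    using t by simp_all
qed

lemma F_coupling_theta2:
  assumes "i \<noteq> j"
  shows "F i j (coupling_theta2 i j Y \<phi> \<eta>) Y = set_direction i j (cos \<phi>) (sin \<phi>) Y"
proof (cases "Y i = 0 \<and> Y j = 0")
  case True
  then show ?thesis
    by (auto simp: F_def set_direction_def coupling_theta2_def)
next
  case False
  obtain r \<beta> where "r > 0" and \<beta>: "Y i = r * cos \<beta>" "Y j = r * sin \<beta>"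
    using polar_form[OF False] .
  have r: "sqrt ((Y i)^2 + (Y j)^2) = r"
    using \<open>r > 0\<close> by (simp add: \<beta> sqrt_polar)
  obtain t where t: "0 \<le> t" "t < 2 * pi" "cos t = cos (\<phi> - \<beta>)" "sin t = sin (\<phi> - \<beta>)"
    by (rule angle_representative)
  have rot: "F i j u Y i = r * cos \<phi> \<and> F i j u Y j = r * sin \<phi> \<longleftrightarrow>
      cos u = cos (\<phi> - \<beta>) \<and> sin u = sin (\<phi> - \<beta>)" for u
    using F_polar[OF assms \<beta>] \<open>r > 0\<close> cos_sin_add_eq_iff[of u \<beta> \<phi>] by simp
  have "coupling_theta2 i j Y \<phi> \<eta> = t"
    unfolding coupling_theta2_def if_not_P[OF False] r
    by (rule the_angle_eq) (use t rot in auto)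
  then show ?thesis
    using rot[of t] t assms by (auto simp: set_direction_def F_def r fun_eq_iff)
qed

definition coupling_direction :: "nat \<Rightarrow> nat \<Rightarrow> real \<Rightarrow> real \<Rightarrow> (nat \<Rightarrow> real) \<Rightarrow> real \<times> real" where
  "coupling_direction i j \<theta> \<psi> X =
     (if X i = 0 \<and> X j = 0 then (cos \<psi>, sin \<psi>)
      else let r = sqrt ((X i)^2 + (X j)^2) in (F i j \<theta> X i / r, F i j \<theta> X j / r))"

text \<open>A form of coupling_step without definite descriptions: both vectors are given the direction
  (fst d, snd d) = (cos phi, sin phi) in the (i,j)-plane. Unlike coupling_step it is visibly
  measurable in the input.\<close>

definition proportional_step ::
  "(nat \<Rightarrow> real) \<times> (nat \<Rightarrow> real) \<Rightarrow> (nat \<times> nat) \<times> real \<times> real \<times> real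
     \<Rightarrow> (nat \<Rightarrow> real) \<times> (nat \<Rightarrow> real)" where
  "proportional_step XY inp =
     (let i = fst (fst inp); j = snd (fst inp);
          d = coupling_direction i j (fst (snd inp)) (fst (snd (snd inp))) (fst XY)
      in (set_direction i j (fst d) (snd d) (fst XY), set_direction i j (fst d) (snd d) (snd XY)))"

lemma coupling_direction_polar:
  assumes "i \<noteq> j" "r > 0" "X i = r * cos \<alpha>" "X j = r * sin \<alpha>"
  shows "coupling_direction i j \<theta> \<psi> X = (cos (\<theta> + \<alpha>), sin (\<theta> + \<alpha>))"
proof -
  have "\<not> (X i = 0 \<and> X j = 0)"
    using polar_nonzero[OF assms(2)] assms(3,4) by simp
  then show ?thesis
    using assms by (auto simp: coupling_direction_def F_polar sqrt_polar)
qed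

lemma coupling_step_eq_proportional_step:
  assumes "i \<noteq> j"
  shows "coupling_step (X, Y) ((i, j), \<theta>, \<psi>, \<eta>) = proportional_step (X, Y) ((i, j), \<theta>, \<psi>, \<eta>)"
proof -
  define \<phi> where "\<phi> = coupling_phi i j X (F i j \<theta> X) \<psi>"
  have "coupling_direction i j \<theta> \<psi> X = (cos \<phi>, sin \<phi>) \<and>
      F i j \<theta> X = set_direction i j (cos \<phi>) (sin \<phi>) X"
  proof (cases "X i = 0 \<and> X j = 0")
    case True
    then show ?thesis
      by (auto simp: \<phi>_def coupling_phi_def coupling_direction_def F_def set_direction_def)
  next
    case False
    obtain r \<alpha> where "r > 0" and \<alpha>: "X i = r * cos \<alpha>" "X j = r * sin \<alpha>"
      using polar_form[OF False] .
    show ?thesis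
      using coupling_phi_polar[OF assms \<open>r > 0\<close> \<alpha>] coupling_direction_polar[OF assms \<open>r > 0\<close> \<alpha>]
        F_polar[OF assms \<alpha>] assms \<open>r > 0\<close>
      by (auto simp: \<phi>_def set_direction_def F_def \<alpha> sqrt_polar fun_eq_iff)
  qed
  then show ?thesis
    using F_coupling_theta2[OF assms]
    by (simp add: coupling_step_def proportional_step_def \<phi>_def Let_def)
qed

lemma set_direction_other: "k \<noteq> i \<Longrightarrow> k \<noteq> j \<Longrightarrow> set_direction i j c s X k = X k"
  by (simp add: set_direction_def Let_def)

lemma set_direction_squares:
  assumes "i \<noteq> j"
  shows "(set_direction i j c s X i)^2 = ((X i)^2 + (X j)^2) * c^2"
    and "(set_direction i j c s X j)^2 = ((X i)^2 + (X j)^2) * s^2"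
  using assms by (simp_all add: set_direction_def Let_def power_mult_distrib)

lemma sum_remove2:
  fixes f :: "nat \<Rightarrow> 'a::comm_monoid_add"
  assumes "i < n" "j < n" "i \<noteq> j"
  shows "(\<Sum>k<n. f k) = f i + f j + (\<Sum>k\<in>{..<n} - {i, j}. f k)"
proof -
  have "(\<Sum>k<n. f k) = f i + (\<Sum>k\<in>{..<n} - {i}. f k)"
    using assms by (simp add: sum.remove)
  also have "(\<Sum>k\<in>{..<n} - {i}. f k) = f j + (\<Sum>k\<in>{..<n} - {i} - {j}. f k)"
    using assms by (subst sum.remove[of _ j]) auto
  also have "{..<n} - {i} - {j} = {..<n} - {i, j}"
    by auto
  finally show ?thesis
    by (simp add: add.assoc)
qed

lemma sum_squares_set_direction:
  assumes "i < n" "j < n" "i \<noteq> j" "c^2 + s^2 = 1"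
  shows "(\<Sum>k<n. (set_direction i j c s X k)^2) = (\<Sum>k<n. (X k)^2)"
proof -
  have "(\<Sum>k\<in>{..<n} - {i, j}. (set_direction i j c s X k)^2) = (\<Sum>k\<in>{..<n} - {i, j}. (X k)^2)"
    by (intro sum.cong) (auto simp: set_direction_other)
  then show ?thesis
    using assms by (simp add: sum_remove2[OF assms(1-3)] set_direction_squares flip: distrib_left)
qed

definition sq_coord_dist :: "nat \<Rightarrow> (nat \<Rightarrow> real) \<times> (nat \<Rightarrow> real) \<Rightarrow> real" where
  "sq_coord_dist n XY = (\<Sum>k<n. ((fst XY k)^2 - (snd XY k)^2)^2)"

lemma sq_coord_dist_nonneg: "sq_coord_dist n XY \<ge> 0"
  by (simp add: sq_coord_dist_def sum_nonneg)

lemma sq_coord_dist_set_direction: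
  assumes "i < n" "j < n" "i \<noteq> j"
  shows "sq_coord_dist n (set_direction i j c s X, set_direction i j c s Y) =
      (\<Sum>k\<in>{..<n} - {i, j}. ((X k)^2 - (Y k)^2)^2)
      + ((X i)^2 - (Y i)^2 + ((X j)^2 - (Y j)^2))^2 * (c^4 + s^4)"
proof -
  define A where "A = (X i)^2 - (Y i)^2 + ((X j)^2 - (Y j)^2)"
  have "(\<Sum>k\<in>{..<n} - {i, j}. ((set_direction i j c s X k)^2 - (set_direction i j c s Y k)^2)^2) =
      (\<Sum>k\<in>{..<n} - {i, j}. ((X k)^2 - (Y k)^2)^2)"
    by (intro sum.cong) (auto simp: set_direction_other)
  moreover have "(set_direction i j c s X i)^2 - (set_direction i j c s Y i)^2 = A * c^2"
    and "(set_direction i j c s X j)^2 - (set_direction i j c s Y j)^2 = A * s^2"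
    by (simp_all add: A_def set_direction_squares[OF assms(3)] algebra_simps)
  moreover have "(A * c^2)^2 + (A * s^2)^2 = A^2 * (c^4 + s^4)"
    by algebra
  ultimately show ?thesis
    unfolding sq_coord_dist_def fst_conv snd_conv sum_remove2[OF assms] A_def by simp
qed

lemma sq_coord_dist_proportional_step:
  assumes "i < n" "j < n" "i \<noteq> j" "coupling_direction i j \<theta> \<psi> X = (cos \<phi>, sin \<phi>)"
  shows "sq_coord_dist n (proportional_step (X, Y) ((i, j), \<theta>, \<psi>, \<eta>)) =
      (\<Sum>k\<in>{..<n} - {i, j}. ((X k)^2 - (Y k)^2)^2)
      + ((X i)^2 - (Y i)^2 + ((X j)^2 - (Y j)^2))^2 * ((cos \<phi>)^4 + (sin \<phi>)^4)"
  using assms by (simp add: proportional_step_def sq_coord_dist_set_direction)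

lemma coupling_direction_eq_cos_sin:
  assumes "i \<noteq> j"
  obtains \<phi> where "coupling_direction i j \<theta> \<psi> X = (cos \<phi>, sin \<phi>)"
proof (cases "X i = 0 \<and> X j = 0")
  case True
  then show ?thesis
    using that by (simp add: coupling_direction_def)
next
  case False
  obtain r \<alpha> where "r > 0" and \<alpha>: "X i = r * cos \<alpha>" "X j = r * sin \<alpha>"
    using polar_form[OF False] .
  show ?thesis
    using that coupling_direction_polar[OF assms \<open>r > 0\<close> \<alpha>] by blast
qed

lemma sum_squares_proportional_step:
  assumes "i < n" "j < n" "i \<noteq> j"
  shows "(\<Sum>k<n. (fst (proportional_step (X, Y) ((i, j), \<theta>, \<psi>, \<eta>)) k)^2) = (\<Sum>k<n. (X k)^2)"
    and "(\<Sum>k<n. (snd (proportional_step (X, Y) ((i, j), \<theta>, \<psi>, \<eta>)) k)^2) = (\<Sum>k<n. (Y k)^2)"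
proof -
  obtain \<phi> where "coupling_direction i j \<theta> \<psi> X = (cos \<phi>, sin \<phi>)"
    using coupling_direction_eq_cos_sin[OF assms(3)] .
  then show "(\<Sum>k<n. (fst (proportional_step (X, Y) ((i, j), \<theta>, \<psi>, \<eta>)) k)^2) = (\<Sum>k<n. (X k)^2)"
    and "(\<Sum>k<n. (snd (proportional_step (X, Y) ((i, j), \<theta>, \<psi>, \<eta>)) k)^2) = (\<Sum>k<n. (Y k)^2)"
    by (simp_all add: proportional_step_def sum_squares_set_direction[OF assms])
qed

lemma has_integral_cos4_sin4:
  "((\<lambda>t. (cos (t + \<alpha>))^4 + (sin (t + \<alpha>))^4) has_integral 3 * pi / 2) {0..2 * pi}"
proof -
  \<comment> \<open>With c = cos (t + alpha) and s = sin (t + alpha): c^4 + s^4 = 3/4 + ((c^2 - s^2)^2 - 4 s^2 c^2) / 4,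
    and the second summand is the derivative of s c (c^2 - s^2) / 4.\<close>
  define P where "P t = 3 / 4 * t + 1 / 4 * (sin (t + \<alpha>) * cos (t + \<alpha>) * ((cos (t + \<alpha>))^2 - (sin (t + \<alpha>))^2))"
    for t
  have "(P has_real_derivative (cos (t + \<alpha>))^4 + (sin (t + \<alpha>))^4) (at t)" for t
    unfolding P_def
    by (rule derivative_eq_intros refl)+
       (simp add: numeral_2_eq_2, insert sin_cos_squared_add[of "t + \<alpha>"], algebra)
  then have "((\<lambda>t. (cos (t + \<alpha>))^4 + (sin (t + \<alpha>))^4) has_integral P (2 * pi) - P 0) {0..2 * pi}"
    by (intro fundamental_theorem_of_calculus)
       (auto simp: has_real_derivative_iff_has_vector_derivative has_vector_derivative_at_within)
  moreover have "P (2 * pi) - P 0 = 3 * pi / 2"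
    by (simp add: P_def add.commute[of _ \<alpha>])
  ultimately show ?thesis
    by simp
qed

lemma prob_space_uniform_angle: "prob_space uniform_angle"
  unfolding uniform_angle_def by (rule prob_space_uniform_measure) auto

lemma nn_integral_uniform_angle:
  assumes "\<And>t. f t \<ge> 0" "f \<in> borel_measurable borel" "(f has_integral I) {0..2 * pi}"
  shows "(\<integral>\<^sup>+t. ennreal (f t) \<partial>uniform_angle) = ennreal (I / (2 * pi))"
proof -
  have "(f has_integral I) {0..<2 * pi}"
    by (rule has_integral_spike_set_eq[THEN iffD1, OF _ _ assms(3)])
       (rule negligible_subset[of "{2 * pi}"]; auto)+
  then have "(\<integral>\<^sup>+t. ennreal (f t) * indicator {0..<2 * pi} t \<partial>lborel) = ennreal I"
    using assms(1) by (intro nn_integral_has_integral_lebesgue') auto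
  moreover have "I \<ge> 0"
    using assms(1,3) by (auto intro: has_integral_nonneg)
  ultimately show ?thesis
    using assms(2) unfolding uniform_angle_def
    by (simp add: nn_integral_uniform_measure divide_ennreal)
qed

lemma nn_integral_uniform_angle_cos4_sin4:
  fixes R S :: real
  assumes "R \<ge> 0" "S \<ge> 0"
  shows "(\<integral>\<^sup>+\<theta>. ennreal (R + S * ((cos (\<theta> + \<alpha>))^4 + (sin (\<theta> + \<alpha>))^4)) \<partial>uniform_angle)
      = ennreal (R + 3 / 4 * S)"
proof -
  have "((\<lambda>\<theta>. R + S * ((cos (\<theta> + \<alpha>))^4 + (sin (\<theta> + \<alpha>))^4)) has_integral
      2 * pi * R + S * (3 * pi / 2)) {0..2 * pi}"
    using has_integral_const_real[of R 0 "2 * pi"]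
    by (intro has_integral_add has_integral_mult_right has_integral_cos4_sin4) auto
  then show ?thesis
    using assms by (subst nn_integral_uniform_angle) (auto simp: field_simps)
qed

lemma nn_integral_pair_fst:
  assumes "prob_space N" and [measurable]: "f \<in> borel_measurable M"
  shows "(\<integral>\<^sup>+z. f (fst z) \<partial>(M \<Otimes>\<^sub>M N)) = (\<integral>\<^sup>+x. f x \<partial>M)"
proof -
  have "(\<integral>\<^sup>+z. f (fst z) \<partial>(M \<Otimes>\<^sub>M N)) = (\<integral>\<^sup>+x. f x \<partial>distr (M \<Otimes>\<^sub>M N) M fst)"
    by (simp add: nn_integral_distr)
  then show ?thesis
    by (simp add: prob_space.distr_pair_fst[OF assms(1)])
qed

lemma nn_integral_pair_snd:
  assumes "prob_space M" "sigma_finite_measure N" and [measurable]: "f \<in> borel_measurable N"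
  shows "(\<integral>\<^sup>+z. f (snd z) \<partial>(M \<Otimes>\<^sub>M N)) = (\<integral>\<^sup>+y. f y \<partial>N)"
proof -
  interpret M: prob_space M by fact
  interpret N: sigma_finite_measure N by fact
  have "(\<integral>\<^sup>+z. f (snd z) \<partial>(M \<Otimes>\<^sub>M N)) = (\<integral>\<^sup>+x. \<integral>\<^sup>+y. f y \<partial>N \<partial>M)"
    by (subst N.nn_integral_fst[symmetric]) simp_all
  then show ?thesis
    by (simp add: M.emeasure_space_1)
qed

lemma nn_integral_uniform_angle3:
  assumes [measurable]: "g \<in> borel_measurable uniform_angle"
  shows "(\<integral>\<^sup>+z. g (fst z) \<partial>(uniform_angle \<Otimes>\<^sub>M (uniform_angle \<Otimes>\<^sub>M uniform_angle))) = (\<integral>\<^sup>+\<theta>. g \<theta> \<partial>uniform_angle)"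
    and "(\<integral>\<^sup>+z. g (fst (snd z)) \<partial>(uniform_angle \<Otimes>\<^sub>M (uniform_angle \<Otimes>\<^sub>M uniform_angle))) = (\<integral>\<^sup>+\<theta>. g \<theta> \<partial>uniform_angle)"
proof -
  have "prob_space (uniform_angle \<Otimes>\<^sub>M uniform_angle)"
    by (intro prob_space_pair prob_space_uniform_angle)
  then show "(\<integral>\<^sup>+z. g (fst z) \<partial>(uniform_angle \<Otimes>\<^sub>M (uniform_angle \<Otimes>\<^sub>M uniform_angle))) = (\<integral>\<^sup>+\<theta>. g \<theta> \<partial>uniform_angle)"
    and "(\<integral>\<^sup>+z. g (fst (snd z)) \<partial>(uniform_angle \<Otimes>\<^sub>M (uniform_angle \<Otimes>\<^sub>M uniform_angle))) = (\<integral>\<^sup>+\<theta>. g \<theta> \<partial>uniform_angle)"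
    using nn_integral_pair_snd[of uniform_angle "uniform_angle \<Otimes>\<^sub>M uniform_angle" "\<lambda>w. g (fst w)"]
    by (simp_all add: nn_integral_pair_fst prob_space_uniform_angle prob_space_imp_sigma_finite)
qed

lemma nn_integral_sq_coord_dist_proportional_step:
  assumes "i < n" "j < n" "i \<noteq> j"
  shows "(\<integral>\<^sup>+z. ennreal (sq_coord_dist n (proportional_step (X, Y) ((i, j), z)))
           \<partial>(uniform_angle \<Otimes>\<^sub>M (uniform_angle \<Otimes>\<^sub>M uniform_angle)))
       = ennreal ((\<Sum>k\<in>{..<n} - {i, j}. ((X k)^2 - (Y k)^2)^2)
                  + 3 / 4 * ((X i)^2 - (Y i)^2 + ((X j)^2 - (Y j)^2))^2)"
proof -
  define R where "R = (\<Sum>k\<in>{..<n} - {i, j}. ((X k)^2 - (Y k)^2)^2)"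
  define S where "S = ((X i)^2 - (Y i)^2 + ((X j)^2 - (Y j)^2))^2"
  define g where "g \<alpha> \<theta> = ennreal (R + S * ((cos (\<theta> + \<alpha>))^4 + (sin (\<theta> + \<alpha>))^4))" for \<alpha> \<theta>
  have "R \<ge> 0" "S \<ge> 0"
    by (simp_all add: R_def S_def sum_nonneg)
  then have mean: "(\<integral>\<^sup>+\<theta>. g \<alpha> \<theta> \<partial>uniform_angle) = ennreal (R + 3 / 4 * S)" for \<alpha>
    unfolding g_def by (rule nn_integral_uniform_angle_cos4_sin4)
  have [measurable]: "g \<alpha> \<in> borel_measurable uniform_angle" for \<alpha>
    unfolding g_def uniform_angle_def by measurable
  show ?thesis
  proof (cases "X i = 0 \<and> X j = 0")
    case True
    have "ennreal (sq_coord_dist n (proportional_step (X, Y) ((i, j), \<theta>, \<psi>, \<eta>))) = g 0 \<psi>" for \<theta> \<psi> \<eta>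
      using True sq_coord_dist_proportional_step[OF assms, of \<theta> \<psi> X \<psi>]
      by (simp add: coupling_direction_def g_def R_def S_def)
    then have "(\<integral>\<^sup>+z. ennreal (sq_coord_dist n (proportional_step (X, Y) ((i, j), z)))
        \<partial>(uniform_angle \<Otimes>\<^sub>M (uniform_angle \<Otimes>\<^sub>M uniform_angle)))
      = (\<integral>\<^sup>+z. g 0 (fst (snd z)) \<partial>(uniform_angle \<Otimes>\<^sub>M (uniform_angle \<Otimes>\<^sub>M uniform_angle)))"
      by (intro nn_integral_cong) (metis prod.collapse)
    then show ?thesis
      by (simp add: nn_integral_uniform_angle3 mean R_def S_def)
  next
    case False
    obtain r \<alpha> where "r > 0" and \<alpha>: "X i = r * cos \<alpha>" "X j = r * sin \<alpha>"
      using polar_form[OF False] .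
    have "ennreal (sq_coord_dist n (proportional_step (X, Y) ((i, j), \<theta>, \<psi>, \<eta>))) = g \<alpha> \<theta>" for \<theta> \<psi> \<eta>
      using sq_coord_dist_proportional_step[OF assms coupling_direction_polar[OF assms(3) \<open>r > 0\<close> \<alpha>]]
      by (simp add: g_def R_def S_def)
    then have "(\<integral>\<^sup>+z. ennreal (sq_coord_dist n (proportional_step (X, Y) ((i, j), z)))
        \<partial>(uniform_angle \<Otimes>\<^sub>M (uniform_angle \<Otimes>\<^sub>M uniform_angle)))
      = (\<integral>\<^sup>+z. g \<alpha> (fst z) \<partial>(uniform_angle \<Otimes>\<^sub>M (uniform_angle \<Otimes>\<^sub>M uniform_angle)))"
      by (intro nn_integral_cong) (metis prod.collapse)
    then show ?thesis
      by (simp add: nn_integral_uniform_angle3 mean R_def S_def)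
  qed
qed

definition index_pairs :: "nat \<Rightarrow> (nat \<times> nat) set" where
  "index_pairs n = {(i, j). i < j \<and> j < n}"

lemma finite_index_pairs: "finite (index_pairs n)"
  by (rule finite_subset[of _ "{..<n} \<times> {..<n}"]) (auto simp: index_pairs_def)

lemma sum_index_pairs_symmetric:
  fixes f :: "nat \<Rightarrow> nat \<Rightarrow> real"
  assumes "\<And>i j. f i j = f j i"
  shows "2 * (\<Sum>(i, j)\<in>index_pairs n. f i j) = (\<Sum>i<n. \<Sum>j<n. f i j) - (\<Sum>i<n. f i i)"
proof -
  define L where "L = prod.swap ` index_pairs n"
  define D where "D = (\<lambda>i. (i, i)) ` {..<n}"
  have fin: "finite L" "finite D"
    by (simp_all add: L_def D_def finite_index_pairs)
  have "{..<n} \<times> {..<n} = (index_pairs n \<union> L) \<union> D"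
    by (auto simp: index_pairs_def L_def D_def image_iff)
  then have "(\<Sum>i<n. \<Sum>j<n. f i j) = (\<Sum>(i, j)\<in>(index_pairs n \<union> L) \<union> D. f i j)"
    by (simp add: sum.cartesian_product)
  also have "\<dots> = (\<Sum>(i, j)\<in>index_pairs n. f i j) + (\<Sum>(i, j)\<in>L. f i j) + (\<Sum>(i, j)\<in>D. f i j)"
    using fin finite_index_pairs
    by (subst sum.union_disjoint sum.union_disjoint; auto simp: index_pairs_def L_def D_def)+
  also have "(\<Sum>(i, j)\<in>L. f i j) = (\<Sum>(i, j)\<in>index_pairs n. f i j)"
    unfolding L_def using assms by (subst sum.reindex) (auto simp: case_prod_beta)
  also have "(\<Sum>(i, j)\<in>D. f i j) = (\<Sum>i<n. f i i)"
    unfolding D_def by (subst sum.reindex) (auto simp: inj_on_def)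
  finally show ?thesis
    by simp
qed

lemma card_index_pairs: "2 * real (card (index_pairs n)) = real n * real n - real n"
  using sum_index_pairs_symmetric[of "\<lambda>i j. 1" n] by simp

lemma sum_index_pairs_averaged_pair:
  fixes a :: "nat \<Rightarrow> real"
  assumes "(\<Sum>k<n. a k) = 0"
  shows "(\<Sum>(i, j)\<in>index_pairs n. (\<Sum>k\<in>{..<n} - {i, j}. (a k)^2) + 3 / 4 * (a i + a j)^2)
      = (real (card (index_pairs n)) - (real n + 2) / 4) * (\<Sum>k<n. (a k)^2)"
proof -
  define D where "D = (\<Sum>k<n. (a k)^2)"
  have summand: "(\<Sum>k\<in>{..<n} - {i, j}. (a k)^2) + 3 / 4 * (a i + a j)^2
      = D - 1 / 4 * ((a i)^2 + (a j)^2) + 3 / 2 * (a i * a j)" if "(i, j) \<in> index_pairs n" for i j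
  proof -
    have "i < n" "j < n" "i \<noteq> j"
      using that by (auto simp: index_pairs_def)
    then have "(\<Sum>k\<in>{..<n} - {i, j}. (a k)^2) = D - (a i)^2 - (a j)^2"
      unfolding D_def by (simp add: sum_remove2)
    then show ?thesis
      by (simp add: power2_eq_square algebra_simps)
  qed
  have "2 * (\<Sum>(i, j)\<in>index_pairs n. (a i)^2 + (a j)^2) = 2 * real n * D - 2 * D"
    using sum_index_pairs_symmetric[of "\<lambda>i j. (a i)^2 + (a j)^2" n]
    by (simp add: sum.distrib D_def sum_distrib_left mult.assoc)
  then have squares: "(\<Sum>(i, j)\<in>index_pairs n. (a i)^2 + (a j)^2) = (real n - 1) * D"
    by (simp add: algebra_simps)
  have "(\<Sum>i<n. \<Sum>j<n. a i * a j) = (\<Sum>k<n. a k) * (\<Sum>k<n. a k)"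
    by (simp add: sum_product)
  then have "2 * (\<Sum>(i, j)\<in>index_pairs n. a i * a j) = - D"
    using sum_index_pairs_symmetric[of "\<lambda>i j. a i * a j" n] assms
    by (simp add: D_def power2_eq_square)
  then have products: "(\<Sum>(i, j)\<in>index_pairs n. a i * a j) = - D / 2"
    by simp
  have "(\<Sum>(i, j)\<in>index_pairs n. (\<Sum>k\<in>{..<n} - {i, j}. (a k)^2) + 3 / 4 * (a i + a j)^2)
      = (\<Sum>(i, j)\<in>index_pairs n. D - 1 / 4 * ((a i)^2 + (a j)^2) + 3 / 2 * (a i * a j))"
    by (intro sum.cong refl) (simp only: split_paired_all prod.case summand)
  also have "\<dots> = real (card (index_pairs n)) * D - 1 / 4 * (\<Sum>(i, j)\<in>index_pairs n. (a i)^2 + (a j)^2)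
      + 3 / 2 * (\<Sum>(i, j)\<in>index_pairs n. a i * a j)"
    unfolding case_prod_unfold sum.distrib sum_subtractf sum_distrib_left[symmetric] sum_constant by simp
  also have "\<dots> = (real (card (index_pairs n)) - (real n + 2) / 4) * D"
    unfolding squares products by (simp add: field_simps)
  finally show ?thesis
    unfolding D_def .
qed

lemma mean_index_pairs_averaged_pair_le:
  fixes a :: "nat \<Rightarrow> real"
  assumes "n \<ge> 2" "(\<Sum>k<n. a k) = 0"
  shows "(\<Sum>(i, j)\<in>index_pairs n. (\<Sum>k\<in>{..<n} - {i, j}. (a k)^2) + 3 / 4 * (a i + a j)^2)
      / real (card (index_pairs n)) \<le> (1 - 1 / (2 * real n)) * (\<Sum>k<n. (a k)^2)"
proof -
  define N where "N = real (card (index_pairs n))"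
  define D where "D = (\<Sum>k<n. (a k)^2)"
  have "D \<ge> 0"
    by (simp add: D_def sum_nonneg)
  have N: "N = real n * (real n - 1) / 2"
    using card_index_pairs[of n] by (simp add: N_def algebra_simps)
  moreover have "real n * (real n - 1) > 0"
    using assms(1) by simp
  ultimately have "N > 0"
    by simp
  have "(N - (real n + 2) / 4) * D \<le> (N - (real n - 1) / 4) * D"
    using \<open>D \<ge> 0\<close> by (intro mult_right_mono) auto
  also have "\<dots> = (1 - 1 / (2 * real n)) * D * N"
    using assms(1) by (simp add: N field_simps)
  finally show ?thesis
    using \<open>N > 0\<close> unfolding sum_index_pairs_averaged_pair[OF assms(2)]
    by (simp add: N_def D_def pos_divide_le_eq)
qed

lemma prob_space_uniform_count_index_pairs:
  assumes "n \<ge> 2"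
  shows "prob_space (uniform_count_measure (index_pairs n))"
proof -
  have "(0, 1) \<in> index_pairs n"
    using assms by (simp add: index_pairs_def)
  then show ?thesis
    using finite_index_pairs by (intro prob_space_uniform_count_measure) auto
qed

lemma prob_space_coupling_input: "n \<ge> 2 \<Longrightarrow> prob_space (coupling_input n)"
  unfolding coupling_input_def index_pairs_def[symmetric]
  by (intro prob_space_pair prob_space_uniform_angle prob_space_uniform_count_index_pairs)

lemma measurable_proportional_step:
  assumes [measurable]: "\<And>k. (\<lambda>\<omega>. fst (P \<omega>) k) \<in> borel_measurable N"
    "\<And>k. (\<lambda>\<omega>. snd (P \<omega>) k) \<in> borel_measurable N"
    and Q[measurable]: "Q \<in> measurable N (coupling_input n)"
  shows "(\<lambda>\<omega>. fst (proportional_step (P \<omega>) (Q \<omega>)) k) \<in> borel_measurable N"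
    and "(\<lambda>\<omega>. snd (proportional_step (P \<omega>) (Q \<omega>)) k) \<in> borel_measurable N"
proof -
  have "(\<lambda>\<omega>. fst (Q \<omega>)) \<in> measurable N (uniform_count_measure (index_pairs n))"
    using Q unfolding coupling_input_def index_pairs_def[symmetric] by measurable
  then have pair: "(\<lambda>\<omega>. fst (Q \<omega>)) \<in> measurable N (count_space UNIV)"
    by (rule measurable_compose)
       (simp add: measurable_cong_sets[OF sets_uniform_count_measure_count_space refl])
  have "measurable N uniform_angle = borel_measurable N"
    by (rule measurable_cong_sets) (simp_all add: uniform_angle_def)
  moreover have "(\<lambda>\<omega>. fst (snd (Q \<omega>))) \<in> measurable N uniform_angle"
    "(\<lambda>\<omega>. fst (snd (snd (Q \<omega>)))) \<in> measurable N uniform_angle"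
    using Q unfolding coupling_input_def by measurable
  ultimately have [measurable]: "(\<lambda>\<omega>. fst (snd (Q \<omega>))) \<in> borel_measurable N"
    "(\<lambda>\<omega>. fst (snd (snd (Q \<omega>)))) \<in> borel_measurable N"
    by simp_all
  have fixed_pair: "(\<lambda>\<omega>. fst (proportional_step (P \<omega>) (p, snd (Q \<omega>))) k) \<in> borel_measurable N"
    "(\<lambda>\<omega>. snd (proportional_step (P \<omega>) (p, snd (Q \<omega>))) k) \<in> borel_measurable N" for p
    unfolding proportional_step_def set_direction_def coupling_direction_def F_def Let_def fun_upd_def prod.sel
    by measurable
  show "(\<lambda>\<omega>. fst (proportional_step (P \<omega>) (Q \<omega>)) k) \<in> borel_measurable N"
    using measurable_compose_countable'[where f = "\<lambda>p \<omega>. fst (proportional_step (P \<omega>) (p, snd (Q \<omega>))) k",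
        OF fixed_pair(1) pair] by simp
  show "(\<lambda>\<omega>. snd (proportional_step (P \<omega>) (Q \<omega>)) k) \<in> borel_measurable N"
    using measurable_compose_countable'[where f = "\<lambda>p \<omega>. snd (proportional_step (P \<omega>) (p, snd (Q \<omega>))) k",
        OF fixed_pair(2) pair] by simp
qed

lemma borel_measurable_sq_coord_dist:
  assumes [measurable]: "\<And>k. (\<lambda>\<omega>. fst (P \<omega>) k) \<in> borel_measurable N"
    "\<And>k. (\<lambda>\<omega>. snd (P \<omega>) k) \<in> borel_measurable N"
  shows "(\<lambda>\<omega>. sq_coord_dist n (P \<omega>)) \<in> borel_measurable N"
  unfolding sq_coord_dist_def by measurable

lemma borel_measurable_sq_coord_dist_proportional_step [measurable]:
  "(\<lambda>x. sq_coord_dist m (proportional_step XY x)) \<in> borel_measurable (coupling_input n)"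
  by (intro borel_measurable_sq_coord_dist measurable_proportional_step[where P = "\<lambda>_. XY" and n = n])
    simp_all

lemma nn_integral_sq_coord_dist_proportional_step_le:
  assumes "n \<ge> 2" and norms: "(\<Sum>k<n. (X k)^2) = (\<Sum>k<n. (Y k)^2)"
  shows "(\<integral>\<^sup>+x. ennreal (sq_coord_dist n (proportional_step (X, Y) x)) \<partial>coupling_input n)
      \<le> ennreal ((1 - 1 / (2 * real n)) * sq_coord_dist n (X, Y))"
proof -
  define A where "A = uniform_angle \<Otimes>\<^sub>M (uniform_angle \<Otimes>\<^sub>M uniform_angle)"
  define N where "N = real (card (index_pairs n))"
  define a where "a k = (X k)^2 - (Y k)^2" for k
  define V where "V i j = (\<Sum>k\<in>{..<n} - {i, j}. (a k)^2) + 3 / 4 * (a i + a j)^2" for i j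
  have V: "V i j \<ge> 0" for i j
    by (simp add: V_def sum_nonneg)
  have input: "coupling_input n = uniform_count_measure (index_pairs n) \<Otimes>\<^sub>M A"
    by (simp add: coupling_input_def A_def index_pairs_def)
  interpret A: prob_space A
    unfolding A_def by (intro prob_space_pair prob_space_uniform_angle)
  have "(\<integral>\<^sup>+x. ennreal (sq_coord_dist n (proportional_step (X, Y) x)) \<partial>coupling_input n)
      = (\<integral>\<^sup>+p. \<integral>\<^sup>+z. ennreal (sq_coord_dist n (proportional_step (X, Y) (p, z))) \<partial>A \<partial>uniform_count_measure (index_pairs n))"
    unfolding input by (rule A.nn_integral_fst[symmetric]) (simp flip: input)
  also have "\<dots> = (\<integral>\<^sup>+p. ennreal (V (fst p) (snd p)) \<partial>uniform_count_measure (index_pairs n))"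
  proof (intro nn_integral_cong)
    fix p assume "p \<in> space (uniform_count_measure (index_pairs n))"
    then have "fst p < n" "snd p < n" "fst p \<noteq> snd p"
      by (auto simp: index_pairs_def space_uniform_count_measure)
    then show "(\<integral>\<^sup>+z. ennreal (sq_coord_dist n (proportional_step (X, Y) (p, z))) \<partial>A) = ennreal (V (fst p) (snd p))"
      using nn_integral_sq_coord_dist_proportional_step[of "fst p" n "snd p" X Y]
      by (simp add: A_def V_def a_def)
  qed
  also have "\<dots> = ennreal ((\<Sum>(i, j)\<in>index_pairs n. V i j) / N)"
    by (simp add: uniform_count_measure_def nn_integral_point_measure_finite finite_index_pairs
        ennreal_mult[symmetric] V sum_divide_distrib N_def case_prod_unfold)
  also have "\<dots> \<le> ennreal ((1 - 1 / (2 * real n)) * sq_coord_dist n (X, Y))"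
  proof (intro ennreal_leI)
    have "(\<Sum>k<n. a k) = 0"
      using norms by (simp add: a_def sum_subtractf)
    then show "(\<Sum>(i, j)\<in>index_pairs n. V i j) / N \<le> (1 - 1 / (2 * real n)) * sq_coord_dist n (X, Y)"
      using mean_index_pairs_averaged_pair_le[OF assms(1)]
      by (simp add: V_def N_def sq_coord_dist_def a_def)
  qed
  finally show ?thesis .
qed

fun stream_iterate :: "('s \<Rightarrow> 'a \<Rightarrow> 's) \<Rightarrow> 's \<Rightarrow> 'a stream \<Rightarrow> nat \<Rightarrow> 's" where
  "stream_iterate f s \<omega> 0 = s"
| "stream_iterate f s \<omega> (Suc t) = f (stream_iterate f s \<omega> t) (\<omega> !! t)"

lemma stream_iterate_Suc_SCons: "stream_iterate f s (x ## \<omega>) (Suc t) = stream_iterate f (f s x) \<omega> t"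
  by (induction t) simp_all

lemma (in prob_space) nn_integral_stream_iterate_le:
  fixes V :: "'s \<Rightarrow> ennreal"
  assumes invariant: "\<And>s x. s \<in> S \<Longrightarrow> x \<in> space M \<Longrightarrow> f s x \<in> S"
    and drift: "\<And>s. s \<in> S \<Longrightarrow> (\<integral>\<^sup>+x. V (f s x) \<partial>M) \<le> c * V s"
    and measurable_step: "\<And>s. (\<lambda>x. V (f s x)) \<in> borel_measurable M"
    and measurable_iterate: "\<And>s t. (\<lambda>\<omega>. V (stream_iterate f s \<omega> t)) \<in> borel_measurable (stream_space M)"
    and "s \<in> S"
  shows "(\<integral>\<^sup>+\<omega>. V (stream_iterate f s \<omega> t) \<partial>stream_space M) \<le> c ^ t * V s"
  using \<open>s \<in> S\<close>
proof (induction t arbitrary: s)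
  case 0
  interpret S: prob_space "stream_space M"
    by (rule prob_space_stream_space)
  show ?case
    by (simp add: S.emeasure_space_1)
next
  case (Suc t)
  have "(\<integral>\<^sup>+\<omega>. V (stream_iterate f s \<omega> (Suc t)) \<partial>stream_space M)
      = (\<integral>\<^sup>+x. \<integral>\<^sup>+\<omega>. V (stream_iterate f (f s x) \<omega> t) \<partial>stream_space M \<partial>M)"
    using nn_integral_stream_space[OF measurable_iterate[of s "Suc t"]]
    by (simp only: stream_iterate_Suc_SCons)
  also have "\<dots> \<le> (\<integral>\<^sup>+x. c ^ t * V (f s x) \<partial>M)"
    using Suc invariant by (intro nn_integral_mono) auto
  also have "\<dots> = c ^ t * (\<integral>\<^sup>+x. V (f s x) \<partial>M)"
    by (rule nn_integral_cmult[OF measurable_step])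
  also have "\<dots> \<le> c ^ t * (c * V s)"
    using drift[OF Suc.prems] by (rule mult_left_mono) simp
  also have "\<dots> = c ^ Suc t * V s"
    by (simp add: mult_ac)
  finally show ?case .
qed

lemma measurable_stream_iterate_proportional_step:
  "(\<lambda>\<omega>. fst (stream_iterate proportional_step XY \<omega> t) k) \<in> borel_measurable (stream_space (coupling_input n))
   \<and> (\<lambda>\<omega>. snd (stream_iterate proportional_step XY \<omega> t) k) \<in> borel_measurable (stream_space (coupling_input n))"
proof (induction t arbitrary: k)
  case 0
  show ?case
    by simp
next
  case (Suc t)
  then show ?case
    using measurable_proportional_step[OF _ _ measurable_snth] by simp
qed

lemma borel_measurable_sq_coord_dist_stream_iterate [measurable]:
  "(\<lambda>\<omega>. sq_coord_dist m (stream_iterate proportional_step XY \<omega> t)) \<in> borel_measurable (stream_space (coupling_input n))"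
  using measurable_stream_iterate_proportional_step by (intro borel_measurable_sq_coord_dist) blast+

lemma sum_squares_proportional_step_eq:
  assumes "x \<in> space (coupling_input n)" "(\<Sum>k<n. (fst XY k)^2) = (\<Sum>k<n. (snd XY k)^2)"
  shows "(\<Sum>k<n. (fst (proportional_step XY x) k)^2) = (\<Sum>k<n. (snd (proportional_step XY x) k)^2)"
  using assms
  by (cases XY) (auto simp: coupling_input_def space_pair_measure space_uniform_count_measure
      sum_squares_proportional_step)

lemma nn_integral_sq_coord_dist_stream_iterate_le:
  assumes "n \<ge> 2" "(\<Sum>k<n. (X0 k)^2) = (\<Sum>k<n. (Y0 k)^2)"
  shows "(\<integral>\<^sup>+\<omega>. ennreal (sq_coord_dist n (stream_iterate proportional_step (X0, Y0) \<omega> t))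
            \<partial>stream_space (coupling_input n))
      \<le> ennreal ((1 - 1 / (2 * real n)) ^ t * sq_coord_dist n (X0, Y0))"
proof -
  interpret prob_space "coupling_input n"
    using assms(1) by (rule prob_space_coupling_input)
  define c where "c = 1 - 1 / (2 * real n)"
  have "c \<ge> 0"
    using assms(1) by (simp add: c_def field_simps)
  have "(\<integral>\<^sup>+\<omega>. ennreal (sq_coord_dist n (stream_iterate proportional_step (X0, Y0) \<omega> t))
            \<partial>stream_space (coupling_input n)) \<le> ennreal c ^ t * ennreal (sq_coord_dist n (X0, Y0))"
  proof (rule nn_integral_stream_iterate_le[where S = "{XY. (\<Sum>k<n. (fst XY k)^2) = (\<Sum>k<n. (snd XY k)^2)}"])
    fix XY :: "(nat \<Rightarrow> real) \<times> (nat \<Rightarrow> real)"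
    assume "XY \<in> {XY. (\<Sum>k<n. (fst XY k)^2) = (\<Sum>k<n. (snd XY k)^2)}"
    then show "(\<integral>\<^sup>+x. ennreal (sq_coord_dist n (proportional_step XY x)) \<partial>coupling_input n)
        \<le> ennreal c * ennreal (sq_coord_dist n XY)"
      using nn_integral_sq_coord_dist_proportional_step_le[OF assms(1), of "fst XY" "snd XY"] \<open>c \<ge> 0\<close>
      by (simp add: c_def ennreal_mult sq_coord_dist_nonneg)
  qed (use assms(2) sum_squares_proportional_step_eq in simp_all)
  then show ?thesis
    using \<open>c \<ge> 0\<close> by (simp add: c_def ennreal_power ennreal_mult sq_coord_dist_nonneg)
qed

lemma coupled_process_eq_stream_iterate:
  assumes "\<omega> \<in> space (stream_space (coupling_input n))"
  shows "coupled_process X0 Y0 \<omega> t = stream_iterate proportional_step (X0, Y0) \<omega> t"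
proof (induction t)
  case (Suc t)
  have "\<omega> !! t \<in> space (coupling_input n)"
    using assms by (simp add: space_stream_space snth_in)
  then obtain i j \<theta> \<psi> \<eta> where "\<omega> !! t = ((i, j), \<theta>, \<psi>, \<eta>)" "i < j"
    by (auto simp: coupling_input_def space_pair_measure space_uniform_count_measure)
  then show ?case
    using Suc coupling_step_eq_proportional_step[of i j]
    by (metis coupled_process.simps(2) stream_iterate.simps(2) less_irrefl prod.collapse)
qed simp

lemma square_diff_le_add:
  fixes a b :: real
  assumes "0 \<le> a" "a \<le> 1" "0 \<le> b" "b \<le> 1"
  shows "(a - b)^2 \<le> a + b"
proof -
  have "\<bar>a - b\<bar> * \<bar>a - b\<bar> \<le> \<bar>a - b\<bar>"
    using assms by (intro mult_left_le) auto
  then show ?thesis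
    using assms by (simp add: power2_eq_square)
qed

lemma sq_coord_dist_le_2:
  assumes "on_sphere n X" "on_sphere n Y"
  shows "sq_coord_dist n (X, Y) \<le> 2"
proof -
  have "(X k)^2 \<le> 1" "(Y k)^2 \<le> 1" if "k < n" for k
    using assms that member_le_sum[of k "{..<n}" "\<lambda>k. (X k)^2"] member_le_sum[of k "{..<n}" "\<lambda>k. (Y k)^2"]
    by (simp_all add: on_sphere_def)
  then have "sq_coord_dist n (X, Y) \<le> (\<Sum>k<n. (X k)^2 + (Y k)^2)"
    unfolding sq_coord_dist_def by (intro sum_mono) (simp add: square_diff_le_add)
  also have "\<dots> = 2"
    using assms by (simp add: on_sphere_def sum.distrib)
  finally show ?thesis .
qed

theorem lemma3p3:
  fixes n :: nat and X0 Y0 :: "nat \<Rightarrow> real" and t :: nat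
  assumes "n \<ge> 2" and "on_sphere n X0" and "on_sphere n Y0"
  shows "(\<integral>\<^sup>+ \<omega>. ennreal (\<Sum>i<n. ((fst (coupled_process X0 Y0 \<omega> t) i)^2
                                  - (snd (coupled_process X0 Y0 \<omega> t) i)^2)^2)
            \<partial>stream_space (coupling_input n))
         \<le> ennreal (2 * (1 - 1 / (2 * real n)) ^ t)"
proof -
  have "(\<integral>\<^sup>+ \<omega>. ennreal (\<Sum>i<n. ((fst (coupled_process X0 Y0 \<omega> t) i)^2
                                  - (snd (coupled_process X0 Y0 \<omega> t) i)^2)^2)
            \<partial>stream_space (coupling_input n))
      = (\<integral>\<^sup>+\<omega>. ennreal (sq_coord_dist n (stream_iterate proportional_step (X0, Y0) \<omega> t))
            \<partial>stream_space (coupling_input n))"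
    by (intro nn_integral_cong) (simp add: sq_coord_dist_def coupled_process_eq_stream_iterate)
  also have "\<dots> \<le> ennreal ((1 - 1 / (2 * real n)) ^ t * sq_coord_dist n (X0, Y0))"
    using assms by (intro nn_integral_sq_coord_dist_stream_iterate_le) (simp_all add: on_sphere_def)
  also have "\<dots> \<le> ennreal (2 * (1 - 1 / (2 * real n)) ^ t)"
    using sq_coord_dist_le_2[OF assms(2,3)] assms(1)
    by (intro ennreal_leI) (simp add: mult.commute[of 2] mult_left_mono)
  finally show ?thesis .
qed

end
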